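(* Let $f\in\mathbb{H}$ be a pure unit quaternion, $h\in L^1(\mathbb{R}^2,\mathbb{H})$, $h_{\pm}=\frac12(h\pm fhf)$, and $$\mathcal{F}_D^{f,f}\{h\}(\boldsymbol{\omega})=\int_{\mathbb{R}^2}e^{-f\frac12(x_1\omega_1+x_2\omega_2)}\,h(\mathbf{x})\,e^{-f\frac12(x_1\omega_1-x_2\omega_2)}\,d^2\mathbf{x}.$$ Writing $\mathcal{F}^{f,f}_{D\pm}\{h\}=\mathcal{F}^{f,f}_{D}\{h_{\pm}\}$, one has $$\mathcal{F}^{f,f}_{D+}\{h\}=\int_{\mathbb{R}^2}h_+(\mathbf{x})e^{f x_2\omega_2}d^2\mathbf{x}=\int_{\mathbb{R}^2}e^{-f x_2\omega_2}h_+(\mathbf{x})d^2\mathbf{x},\quad \mathcal{F}^{f,f}_{D-}\{h\}=\int_{\mathbb{R}^2}h_-(\mathbf{x})e^{-f x_1\omega_1}d^2\mathbf{x}=\int_{\mathbb{R}^2}e^{-f x_1\omega_1}h_-(\mathbf{x})d^2\mathbf{x}.$$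
   Context: $\mathbb{H}$ is the real quaternion algebra; a pure unit quaternion $f$ satisfies $f^2=-1$, and $e^{\alpha f}=\cos\alpha+f\sin\alpha$. $d^2\mathbf{x}=dx_1dx_2$. *)

theory Defs
  imports "HOL-Analysis.Analysis"
begin

text \<open>Real quaternions H, modelled as R^4 with components
  q$1 (real part), q$2, q$3, q$4 (coefficients of i, j, k).
  Addition, real scaling, norm and Lebesgue measure are those of R^4;
  the Hamilton product is defined explicitly.\<close>

type_synonym quat = "real ^ 4"

definition qmult :: "quat \<Rightarrow> quat \<Rightarrow> quat" where
  "qmult p q = (\<chi> i.
     if i = 1 then p$1 * q$1 - p$2 * q$2 - p$3 * q$3 - p$4 * q$4
     else if i = 2 then p$1 * q$2 + p$2 * q$1 + p$3 * q$4 - p$4 * q$3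
     else if i = 3 then p$1 * q$3 - p$2 * q$4 + p$3 * q$1 + p$4 * q$2
     else p$1 * q$4 + p$2 * q$3 - p$3 * q$2 + p$4 * q$1)"

definition qreal :: "real \<Rightarrow> quat" where
  "qreal r = (\<chi> i. if i = 1 then r else 0)"

definition pure_unit :: "quat \<Rightarrow> bool" where
  "pure_unit f \<longleftrightarrow> f$1 = 0 \<and> norm f = 1"

definition qexp :: "quat \<Rightarrow> real \<Rightarrow> quat" where
  "qexp f \<alpha> = qreal (cos \<alpha>) + sin \<alpha> *\<^sub>R f"

definition hplus :: "quat \<Rightarrow> (real \<times> real \<Rightarrow> quat) \<Rightarrow> real \<times> real \<Rightarrow> quat" where
  "hplus f h x = (1/2) *\<^sub>R (h x + qmult (qmult f (h x)) f)"

definition hminus :: "quat \<Rightarrow> (real \<times> real \<Rightarrow> quat) \<Rightarrow> real \<times> real \<Rightarrow> quat" where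
  "hminus f h x = (1/2) *\<^sub>R (h x - qmult (qmult f (h x)) f)"

definition FD :: "quat \<Rightarrow> (real \<times> real \<Rightarrow> quat) \<Rightarrow> real \<times> real \<Rightarrow> quat" where
  "FD f h \<omega> = (LINT x|lborel.
      qmult (qmult (qexp f (- (1/2) * (fst x * fst \<omega> + snd x * snd \<omega>))) (h x))
            (qexp f (- (1/2) * (fst x * fst \<omega> - snd x * snd \<omega>))))"

end

theory Submission
  imports Defs
begin

text \<open>Since \<open>f\<^sup>2 = -1\<close>, the component \<open>h\<^sub>+\<close> anticommutes with \<open>f\<close> and \<open>h\<^sub>-\<close> commutes
  with it. Hence \<open>exp(\<alpha> f)\<close> can be moved across \<open>h\<^sub>+\<close> at the price of replacing \<open>\<alpha>\<close> by \<open>-\<alpha>\<close>,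
  and across \<open>h\<^sub>-\<close> unchanged. Moving the left kernel of the double-angle transform to the
  right and combining \<open>exp(\<alpha> f) exp(\<beta> f) = exp((\<alpha> + \<beta>) f)\<close>, the \<open>x\<^sub>1\<omega>\<^sub>1\<close> phases cancel
  for \<open>h\<^sub>+\<close> and the \<open>x\<^sub>2\<omega>\<^sub>2\<close> phases cancel for \<open>h\<^sub>-\<close>. All identities hold pointwise under
  the integral.\<close>

lemma qmult_nth:
  "qmult p q $ 1 = p$1 * q$1 - p$2 * q$2 - p$3 * q$3 - p$4 * q$4"
  "qmult p q $ 2 = p$1 * q$2 + p$2 * q$1 + p$3 * q$4 - p$4 * q$3"
  "qmult p q $ 3 = p$1 * q$3 - p$2 * q$4 + p$3 * q$1 + p$4 * q$2"
  "qmult p q $ 4 = p$1 * q$4 + p$2 * q$3 - p$3 * q$2 + p$4 * q$1"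
  by (simp_all add: qmult_def)

lemma qreal_nth: "qreal c $ 1 = c" "qreal c $ 2 = 0" "qreal c $ 3 = 0" "qreal c $ 4 = 0"
  by (simp_all add: qreal_def)

lemma qmult_assoc: "qmult (qmult p q) r = qmult p (qmult q r)"
  unfolding vec_eq_iff forall_4 qmult_nth by (intro conjI; algebra)

lemma qmult_add_left: "qmult (p + q) r = qmult p r + qmult q r"
  and qmult_add_right: "qmult r (p + q) = qmult r p + qmult r q"
  and qmult_diff_left: "qmult (p - q) r = qmult p r - qmult q r"
  and qmult_diff_right: "qmult r (p - q) = qmult r p - qmult r q"
  and qmult_minus_left: "qmult (- p) r = - qmult p r"
  and qmult_minus_right: "qmult r (- p) = - qmult r p"
  and qmult_scaleR_left: "qmult (c *\<^sub>R p) r = c *\<^sub>R qmult p r"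
  and qmult_scaleR_right: "qmult r (c *\<^sub>R p) = c *\<^sub>R qmult r p"
  and qmult_qreal_left: "qmult (qreal c) r = c *\<^sub>R r"
  and qmult_qreal_right: "qmult r (qreal c) = c *\<^sub>R r"
  by (simp_all add: vec_eq_iff forall_4 qmult_nth qreal_nth algebra_simps)

lemmas qmult_linear_simps =
  qmult_add_left qmult_add_right qmult_diff_left qmult_diff_right
  qmult_minus_left qmult_minus_right qmult_scaleR_left qmult_scaleR_right
  qmult_qreal_left qmult_qreal_right

lemma pure_unit_components:
  assumes "pure_unit f"
  shows "f$1 = 0" "f$2 * f$2 + f$3 * f$3 + f$4 * f$4 = 1"
proof -
  show "f$1 = 0" using assms unfolding pure_unit_def by blast
  have "sqrt (\<Sum>i\<in>UNIV. (f$i)\<^sup>2) = 1"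
    using assms unfolding pure_unit_def norm_vec_def L2_set_def by simp
  then show "f$2 * f$2 + f$3 * f$3 + f$4 * f$4 = 1"
    using \<open>f$1 = 0\<close> by (simp add: sum_4 power2_eq_square)
qed

lemma qmult_pure_unit_self:
  assumes "pure_unit f"
  shows "qmult f f = qreal (-1)"
  using pure_unit_components[OF assms]
  unfolding vec_eq_iff forall_4 qmult_nth qreal_nth by (simp add: algebra_simps)

lemma qmult_pure_unit_sandwich:
  assumes "pure_unit f"
  shows "qmult f (qmult (qmult f p) f) = - qmult p f"
    and "qmult (qmult (qmult f p) f) f = - qmult f p"
  by (simp_all add: qmult_assoc flip: qmult_assoc[of f f]
      add: qmult_pure_unit_self[OF assms] qmult_linear_simps)

lemma hplus_anticommute:
  assumes "pure_unit f"
  shows "qmult f (hplus f h x) = - qmult (hplus f h x) f"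
  unfolding hplus_def qmult_linear_simps qmult_pure_unit_sandwich[OF assms]
  by (simp add: algebra_simps)

lemma hminus_commute:
  assumes "pure_unit f"
  shows "qmult f (hminus f h x) = qmult (hminus f h x) f"
  unfolding hminus_def qmult_linear_simps qmult_pure_unit_sandwich[OF assms]
  by (simp add: algebra_simps)

lemma qexp_add:
  assumes "pure_unit f"
  shows "qmult (qexp f a) (qexp f b) = qexp f (a + b)"
proof -
  have "qmult (qexp f a) (qexp f b)
      = qreal (cos a * cos b - sin a * sin b) + (cos a * sin b + sin a * cos b) *\<^sub>R f"
    unfolding qexp_def qmult_linear_simps qmult_pure_unit_self[OF assms]
    by (simp add: vec_eq_iff forall_4 qreal_nth algebra_simps)
  then show ?thesis
    unfolding qexp_def by (simp add: cos_add sin_add algebra_simps)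
qed

lemma qmult_qexp_anticommute:
  assumes "qmult f p = - qmult p f"
  shows "qmult (qexp f a) p = qmult p (qexp f (- a))"
  unfolding qexp_def qmult_linear_simps assms by simp

lemma qmult_qexp_commute:
  assumes "qmult f p = qmult p f"
  shows "qmult (qexp f a) p = qmult p (qexp f a)"
  unfolding qexp_def qmult_linear_simps assms by simp

lemma qexp_sandwich_anticommute:
  assumes "pure_unit f" and "qmult f p = - qmult p f"
  shows "qmult (qmult (qexp f a) p) (qexp f b) = qmult p (qexp f (b - a))"
  by (simp add: qmult_qexp_anticommute[OF assms(2)] qmult_assoc qexp_add[OF assms(1)])

lemma qexp_sandwich_commute:
  assumes "pure_unit f" and "qmult f p = qmult p f"
  shows "qmult (qmult (qexp f a) p) (qexp f b) = qmult p (qexp f (a + b))"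
  by (simp add: qmult_qexp_commute[OF assms(2)] qmult_assoc qexp_add[OF assms(1)])

theorem mainTheorem9:
  fixes f :: quat and h :: "real \<times> real \<Rightarrow> quat"
  assumes "pure_unit f"
    and "integrable lborel h"
  shows "\<forall>\<omega> :: real \<times> real.
      FD f (hplus f h) \<omega>
        = (LINT x|lborel. qmult (hplus f h x) (qexp f (snd x * snd \<omega>)))
    \<and> (LINT x|lborel. qmult (hplus f h x) (qexp f (snd x * snd \<omega>)))
        = (LINT x|lborel. qmult (qexp f (- (snd x * snd \<omega>))) (hplus f h x))
    \<and> FD f (hminus f h) \<omega>
        = (LINT x|lborel. qmult (hminus f h x) (qexp f (- (fst x * fst \<omega>))))
    \<and> (LINT x|lborel. qmult (hminus f h x) (qexp f (- (fst x * fst \<omega>))))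
        = (LINT x|lborel. qmult (qexp f (- (fst x * fst \<omega>))) (hminus f h x))"
proof (intro allI conjI)
  fix \<omega> :: "real \<times> real"
  note hplus_anti = hplus_anticommute[OF assms(1)]
  note hminus_comm = hminus_commute[OF assms(1)]
  show "FD f (hplus f h) \<omega>
      = (LINT x|lborel. qmult (hplus f h x) (qexp f (snd x * snd \<omega>)))"
    unfolding FD_def qexp_sandwich_anticommute[OF assms(1) hplus_anti]
    by (simp add: algebra_simps)
  show "(LINT x|lborel. qmult (hplus f h x) (qexp f (snd x * snd \<omega>)))
      = (LINT x|lborel. qmult (qexp f (- (snd x * snd \<omega>))) (hplus f h x))"
    by (simp add: qmult_qexp_anticommute[OF hplus_anti])
  show "FD f (hminus f h) \<omega>
      = (LINT x|lborel. qmult (hminus f h x) (qexp f (- (fst x * fst \<omega>))))"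
    unfolding FD_def qexp_sandwich_commute[OF assms(1) hminus_comm]
    by (simp add: algebra_simps)
  show "(LINT x|lborel. qmult (hminus f h x) (qexp f (- (fst x * fst \<omega>))))
      = (LINT x|lborel. qmult (qexp f (- (fst x * fst \<omega>))) (hminus f h x))"
    by (simp add: qmult_qexp_commute[OF hminus_comm])
qed

end
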